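(* Let $k\ge 2$ and $s\ge 0$ be integers. For positive integers $n,m$ let $a_{n,m}$ denote the number of ways to place $s$ pairwise non-overlapping $k$-mers on the $n\times m$ rectangular lattice with open (free) boundary conditions in both directions. Then for all $n\ge (k+1)s$ and $m\ge (k+1)s$, $$\sum_{i=0}^{2s}(-1)^i\binom{2s}{i}a_{n-i,m-i}=2^s\frac{(2s)!}{s!}.$$
   Context: The lattice is the set of sites $\{1,\dots,n\}\times\{1,\dots,m\}$ with open boundary conditions in both directions (no wrap-around). A $k$-mer is a rigid linear polymer occupying $k$ consecutive sites of a single row or of a single column. A configuration is a set of $s$ $k$-mers no two of which share a site; unoccupied sites are monomers. $a_{n,m}$ (which depends on $k$ and $s$) counts such configurations; for $s=0$ it equals $1$. *)

theory Defs
  imports Complex_Main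
begin

text \<open>Sites of the n x m lattice are pairs (i,j) with 1 \<le> i \<le> n (row), 1 \<le> j \<le> m (column).
  A k-mer is the set of k consecutive sites in one row or in one column.\<close>

definition kmers :: "nat \<Rightarrow> nat \<Rightarrow> nat \<Rightarrow> (nat \<times> nat) set set" where
  "kmers k n m =
     {{(i, j + t) | t. t < k} | i j. 1 \<le> i \<and> i \<le> n \<and> 1 \<le> j \<and> j + k \<le> m + 1}
   \<union> {{(i + t, j) | t. t < k} | i j. 1 \<le> i \<and> i + k \<le> n + 1 \<and> 1 \<le> j \<and> j \<le> m}"

definition kmer_count :: "nat \<Rightarrow> nat \<Rightarrow> nat \<Rightarrow> nat \<Rightarrow> nat" where
  "kmer_count k s n m =
     card {C. C \<subseteq> kmers k n m \<and> card C = s \<and>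
              (\<forall>A\<in>C. \<forall>B\<in>C. A \<noteq> B \<longrightarrow> A \<inter> B = {})}"

end

(*
  Ordering the s k-mers, s! a(n, m) counts tuples of orientations h, rows r and columns c of
  first sites such that no two k-mers meet. Expanding the product over all pairs of
  (1 - [the pair meets]) by inclusion-exclusion gives a signed sum over orientations and
  overlap patterns, each term of which is a product R(n) C(m): R counts row positions in
  1..n subject to the difference constraints the pattern imposes on rows, C likewise for
  columns. Every constraint between two k-mers eliminates one variable, so for n, m at least
  (k + 1) s the factors are polynomials of degree s (monic) for the empty pattern and of
  degree less than s otherwise. The 2s-th difference along the diagonal kills every product
  of degree below 2s and yields (2s)! for each of the 2^s orientation vectors.
*)

theory Submission
  imports Defs "HOL-Computational_Algebra.Polynomial" "HOL-Library.FuncSet"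
    "HOL-Combinatorics.Multiset_Permutations"
begin

section \<open>Alternating binomial sums of polynomials\<close>

lemma alternating_binomial_sum_power_Suc:
  "(\<Sum>i\<le>Suc K. (-1) ^ i * of_nat (Suc K choose i) * of_nat i ^ Suc j :: 'a::comm_ring_1)
   = - of_nat (Suc K) * (\<Sum>t\<le>j. of_nat (j choose t) *
       (\<Sum>i\<le>K. (-1) ^ i * of_nat (K choose i) * of_nat i ^ t))"
proof -
  have shift: "(-1) ^ Suc i * of_nat (Suc K choose Suc i) * of_nat (Suc i) ^ Suc j
      = - of_nat (Suc K) * ((-1) ^ i * of_nat (K choose i) * (of_nat i + 1) ^ j :: 'a)" for i
  proof -
    have e: "of_nat (Suc K choose Suc i) * (of_nat i + 1) = (of_nat (Suc K) * of_nat (K choose i) :: 'a)"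
      by (metis Suc_times_binomial of_nat_mult mult.commute of_nat_Suc add.commute)
    have "(-1) ^ Suc i * of_nat (Suc K choose Suc i) * of_nat (Suc i) ^ Suc j
        = - ((-1) ^ i * (of_nat (Suc K choose Suc i) * (of_nat i + 1)) * (of_nat i + 1) ^ j :: 'a)"
      by (simp add: algebra_simps del: binomial_Suc_Suc)
    then show ?thesis
      by (simp only: e) (simp add: algebra_simps)
  qed
  have "(\<Sum>i\<le>Suc K. (-1) ^ i * of_nat (Suc K choose i) * of_nat i ^ Suc j :: 'a)
      = (\<Sum>i\<le>K. - of_nat (Suc K) * ((-1) ^ i * of_nat (K choose i) * (of_nat i + 1) ^ j))"
    by (simp only: sum.atMost_Suc_shift shift) simp
  also have "\<dots> = - of_nat (Suc K) * (\<Sum>i\<le>K. (-1) ^ i * of_nat (K choose i) *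
                     (\<Sum>t\<le>j. of_nat (j choose t) * of_nat i ^ t))"
    by (simp add: binomial_ring[of _ 1] sum_distrib_left mult.commute)
  also have "\<dots> = - of_nat (Suc K) * (\<Sum>t\<le>j. of_nat (j choose t) *
                     (\<Sum>i\<le>K. (-1) ^ i * of_nat (K choose i) * of_nat i ^ t))"
    by (simp add: sum_distrib_left sum.swap[of _ "{..K}"] algebra_simps)
  finally show ?thesis .
qed

lemma alternating_binomial_sum_power:
  "j \<le> K \<Longrightarrow> (\<Sum>i\<le>K. (-1) ^ i * of_nat (K choose i) * of_nat i ^ j :: 'a::{comm_ring_1,ring_char_0})
     = of_bool (j = K) * (-1) ^ K * fact K"
proof (induction K arbitrary: j)
  case 0
  then show ?case by simp
next
  case (Suc K)
  show ?case
  proof (cases j)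
    case 0
    then show ?thesis using choose_alternating_sum[of "Suc K", where 'a = 'a] by simp
  next
    case (Suc j')
    with Suc.prems have "(\<Sum>t\<le>j'. of_nat (j' choose t) *
        (\<Sum>i\<le>K. (-1) ^ i * of_nat (K choose i) * of_nat i ^ t :: 'a))
      = (\<Sum>t\<le>j'. of_nat (j' choose t) * (of_bool (t = K) * (-1) ^ K * fact K))"
      by (intro sum.cong refl) (simp add: Suc.IH)
    also have "\<dots> = (\<Sum>t\<le>j'. if t = K then (-1) ^ K * fact K else 0)"
      using Suc.prems Suc by (intro sum.cong refl) auto
    also have "\<dots> = of_bool (j' = K) * (-1) ^ K * fact K"
      using Suc.prems Suc by simp
    finally show ?thesis
      unfolding \<open>j = Suc j'\<close> alternating_binomial_sum_power_Suc by (simp add: algebra_simps)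
  qed
qed

lemma alternating_binomial_sum_poly:
  fixes p :: "'a::{comm_ring_1,ring_char_0} poly"
  assumes "degree p \<le> K"
  shows "(\<Sum>i\<le>K. (-1) ^ i * of_nat (K choose i) * poly p (of_nat i)) = (-1) ^ K * fact K * coeff p K"
proof -
  have "poly p x = (\<Sum>j\<le>K. coeff p j * x ^ j)" for x
    unfolding poly_altdef using assms
    by (intro sum.mono_neutral_left) (auto simp: coeff_eq_0)
  then have "(\<Sum>i\<le>K. (-1) ^ i * of_nat (K choose i) * poly p (of_nat i))
      = (\<Sum>i\<le>K. \<Sum>j\<le>K. coeff p j * ((-1) ^ i * of_nat (K choose i) * of_nat i ^ j))"
    by (simp add: sum_distrib_left algebra_simps)
  also have "\<dots> = (\<Sum>j\<le>K. coeff p j * (\<Sum>i\<le>K. (-1) ^ i * of_nat (K choose i) * of_nat i ^ j))"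
    unfolding sum_distrib_left by (rule sum.swap)
  also have "\<dots> = (\<Sum>j\<le>K. coeff p j * (of_bool (j = K) * (-1) ^ K * fact K))"
    by (intro sum.cong refl) (simp add: alternating_binomial_sum_power)
  also have "\<dots> = (\<Sum>j\<le>K. if j = K then (-1) ^ K * fact K * coeff p K else 0)"
    by (intro sum.cong refl) simp
  also have "\<dots> = (-1) ^ K * fact K * coeff p K"
    by simp
  finally show ?thesis .
qed

text \<open>The two reflections \<open>x \<mapsto> a - x\<close>, \<open>x \<mapsto> b - x\<close> contribute the sign \<open>(-1) ^ K\<close> to
  the leading coefficient, which cancels the sign of the \<open>K\<close>-th difference.\<close>

lemma alternating_binomial_sum_reflected_product:
  fixes P Q :: "'a::{idom,ring_char_0} poly"
  assumes "degree P + degree Q \<le> K"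
  shows "(\<Sum>i\<le>K. (-1) ^ i * of_nat (K choose i) * (poly P (a - of_nat i) * poly Q (b - of_nat i)))
     = of_bool (degree P + degree Q = K) * fact K * lead_coeff P * lead_coeff Q"
proof -
  define PQ where "PQ = pcompose P [:a, -1:] * pcompose Q [:b, -1:]"
  have deg_PQ: "degree PQ \<le> degree P + degree Q"
    unfolding PQ_def using degree_mult_le[of "pcompose P [:a, -1:]" "pcompose Q [:b, -1:]"]
    by (simp add: degree_pcompose)
  have "coeff PQ K = of_bool (degree P + degree Q = K) * (-1) ^ K * lead_coeff P * lead_coeff Q"
  proof (cases "degree P + degree Q = K")
    case True
    have "coeff PQ K = lead_coeff (pcompose P [:a, -1:]) * lead_coeff (pcompose Q [:b, -1:])"
      unfolding PQ_def using True coeff_mult_degree_sum[of "pcompose P [:a, -1:]" "pcompose Q [:b, -1:]"]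
      by (simp add: degree_pcompose)
    also have "\<dots> = (-1) ^ K * lead_coeff P * lead_coeff Q"
      using True by (simp add: lead_coeff_comp flip: True power_add)
    finally show ?thesis using True by simp
  next
    case False
    then show ?thesis using deg_PQ assms by (simp add: coeff_eq_0)
  qed
  moreover have "poly PQ (of_nat i) = poly P (a - of_nat i) * poly Q (b - of_nat i)" for i
    by (simp add: PQ_def poly_pcompose)
  ultimately show ?thesis
    using alternating_binomial_sum_poly[of PQ K] deg_PQ assms by simp
qed

section \<open>Integer placements under difference constraints\<close>

text \<open>A placement \<open>r\<close> puts the segment \<open>r a + lo a..r a + hi a\<close> of every variable \<open>a\<close> inside
  \<open>1..N\<close>; a constraint \<open>(a, b, x)\<close> prescribes \<open>r a - r b = x\<close>.\<close>

definition placements ::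
    "'v set \<Rightarrow> ('v \<Rightarrow> int) \<Rightarrow> ('v \<Rightarrow> int) \<Rightarrow> ('v \<times> 'v \<times> int) set \<Rightarrow> int \<Rightarrow> ('v \<Rightarrow> int) set" where
  "placements V lo hi Cs N = {r \<in> V \<rightarrow>\<^sub>E UNIV.
     (\<forall>a\<in>V. 1 \<le> r a + lo a \<and> r a + hi a \<le> N) \<and> (\<forall>(a, b, x)\<in>Cs. r a - r b = x)}"

text \<open>Every constraint forces the segments of its two variables to overlap, so merging them never
  increases the total length \<open>\<Sum>a\<in>V. hi a - lo a\<close>.\<close>

definition constraints_overlap ::
    "'v set \<Rightarrow> ('v \<Rightarrow> int) \<Rightarrow> ('v \<Rightarrow> int) \<Rightarrow> ('v \<times> 'v \<times> int) set \<Rightarrow> bool" where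
  "constraints_overlap V lo hi Cs \<longleftrightarrow> (\<forall>a\<in>V. lo a \<le> hi a) \<and>
     (\<forall>(a, b, x)\<in>Cs. a \<in> V \<and> b \<in> V \<and> x + lo a \<le> hi b \<and> lo b \<le> x + hi a)"

lemma placements_no_constraints:
  "placements V lo hi {} N = (\<Pi>\<^sub>E a\<in>V. {1 - lo a..N - hi a})"
  by (auto simp: placements_def PiE_def Pi_def)

lemma finite_placements:
  assumes "finite V"
  shows "finite (placements V lo hi Cs N)"
proof (rule finite_subset)
  show "placements V lo hi Cs N \<subseteq> placements V lo hi {} N"
    by (auto simp: placements_def)
  show "finite (placements V lo hi {} N)"
    using assms by (simp add: placements_no_constraints finite_PiE)
qed

lemma card_placements_eq_sum:
  assumes "finite V"
  shows "real (card (placements V lo hi Cs N))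
    = (\<Sum>r\<in>placements V lo hi {} N. of_bool (\<forall>(a, b, x)\<in>Cs. r a - r b = x))"
proof -
  have "placements V lo hi {} N \<inter> {r. \<forall>(a, b, x)\<in>Cs. r a - r b = x} = placements V lo hi Cs N"
    by (auto simp: placements_def)
  then show ?thesis
    using assms by (simp add: finite_placements)
qed

lemma card_placements_no_constraints:
  assumes "finite V" "\<forall>a\<in>V. hi a - lo a \<le> N"
  shows "real (card (placements V lo hi {} N))
     = poly (\<Prod>a\<in>V. [:- of_int (hi a - lo a), 1:]) (of_int N)"
proof -
  have "real (card (placements V lo hi {} N)) = (\<Prod>a\<in>V. real (nat (N + (lo a - hi a))))"
    using assms(1) by (simp add: placements_no_constraints card_PiE)
  also have "\<dots> = (\<Prod>a\<in>V. of_int N - of_int (hi a - lo a))"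
    using assms(2) by (intro prod.cong refl) (auto simp: of_nat_nat)
  finally show ?thesis
    by (simp add: poly_prod algebra_simps)
qed

lemma placements_loop_constraints:
  assumes "\<And>a b x. (a, b, x) \<in> Cs \<Longrightarrow> a = b"
  shows "placements V lo hi Cs N = (if \<forall>(a, b, x)\<in>Cs. x = 0 then placements V lo hi {} N else {})"
proof (cases "\<forall>(a, b, x)\<in>Cs. x = 0")
  case True
  have "r a - r b = x" if "(a, b, x) \<in> Cs" for r a b x
    using True that assms[OF that] by auto
  then show ?thesis
    using True by (auto simp: placements_def)
next
  case False
  then obtain a b x where abx: "(a, b, x) \<in> Cs" "x \<noteq> 0"
    by auto
  then have "r a - r b \<noteq> x" for r
    using assms[OF abx(1)] by simp
  then have "placements V lo hi Cs N = {}"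
    using abx(1) unfolding placements_def by fast
  then show ?thesis
    by (simp only: if_not_P[OF False])
qed

text \<open>Eliminating \<open>b\<close> by a constraint \<open>r a - r b = x\<close>: \<open>b\<close> is renamed to \<open>a\<close>, the offsets of the
  constraints are shifted accordingly, and the segment of \<open>a\<close> is widened to cover that of \<open>b\<close>.\<close>

definition merge_constraint :: "'v \<Rightarrow> 'v \<Rightarrow> int \<Rightarrow> 'v \<times> 'v \<times> int \<Rightarrow> 'v \<times> 'v \<times> int" where
  "merge_constraint a b x = (\<lambda>(c, d, y).
     (if c = b then a else c, if d = b then a else d,
      y + (if c = b then x else 0) - (if d = b then x else 0)))"

lemma placements_merge_iff:
  assumes "a \<noteq> b" "a \<in> V" "b \<in> V" "r b = undefined"
  shows "r(b := r a - x) \<in> placements V lo hi Cs N \<longleftrightarrow>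
    r \<in> placements (V - {b}) (lo(a := min (lo a) (lo b - x))) (hi(a := max (hi a) (hi b - x)))
      (merge_constraint a b x ` Cs) N"
proof -
  let ?r = "r(b := r a - x)"
  have shift: "?r c = r (if c = b then a else c) - (if c = b then x else 0)" for c
    using assms(1) by simp
  have split_V: "(\<forall>c\<in>V. P c) \<longleftrightarrow> P a \<and> P b \<and> (\<forall>c\<in>V - {a, b}. P c)"
    "(\<forall>c\<in>V - {b}. P c) \<longleftrightarrow> P a \<and> (\<forall>c\<in>V - {a, b}. P c)" for P
    using assms by blast+
  have "?r \<in> V \<rightarrow>\<^sub>E UNIV \<longleftrightarrow> r \<in> V - {b} \<rightarrow>\<^sub>E UNIV"
    using assms by (auto simp: PiE_def extensional_def)
  moreover have "(\<forall>c\<in>V. 1 \<le> ?r c + lo c \<and> ?r c + hi c \<le> N) \<longleftrightarrow>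
      (\<forall>c\<in>V - {b}. 1 \<le> r c + (lo(a := min (lo a) (lo b - x))) c \<and>
                    r c + (hi(a := max (hi a) (hi b - x))) c \<le> N)"
    using assms by (simp only: split_V) (auto simp: min_def max_def)
  moreover have "(\<forall>(c, d, y)\<in>Cs. ?r c - ?r d = y) \<longleftrightarrow>
      (\<forall>(c, d, y)\<in>merge_constraint a b x ` Cs. r c - r d = y)"
    unfolding shift by (auto simp: merge_constraint_def)
  ultimately show ?thesis
    by (simp add: placements_def)
qed

lemma card_placements_merge:
  assumes "(a, b, x) \<in> Cs" "a \<noteq> b" "a \<in> V" "b \<in> V"
  shows "card (placements V lo hi Cs N) =
    card (placements (V - {b}) (lo(a := min (lo a) (lo b - x))) (hi(a := max (hi a) (hi b - x)))
      (merge_constraint a b x ` Cs) N)"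
    (is "_ = card ?P'")
proof -
  have undef: "r b = undefined" if "r \<in> ?P'" for r
    using that by (auto simp: placements_def)
  have "placements V lo hi Cs N = (\<lambda>r. r(b := r a - x)) ` ?P'"
  proof (intro equalityI subsetI)
    fix r assume r: "r \<in> placements V lo hi Cs N"
    then have "r b = r a - x"
      using assms(1) by (auto simp: placements_def)
    then have r_eq: "r = (r(b := undefined))(b := (r(b := undefined)) a - x)"
      using assms(2) by auto
    then have "r(b := undefined) \<in> ?P'"
      using r placements_merge_iff[OF assms(2-4), of "r(b := undefined)" x lo hi Cs N]
      by (metis fun_upd_same)
    with r_eq show "r \<in> (\<lambda>r. r(b := r a - x)) ` ?P'"
      by blast
  next
    fix r assume "r \<in> (\<lambda>r. r(b := r a - x)) ` ?P'"
    then show "r \<in> placements V lo hi Cs N"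
      using placements_merge_iff[OF assms(2-4)] undef by blast
  qed
  moreover have "inj_on (\<lambda>r. r(b := r a - x)) ?P'"
    by (rule inj_onI) (metis fun_upd_triv fun_upd_upd undef)
  ultimately show ?thesis
    by (simp add: card_image)
qed

lemma constraints_overlap_merge:
  assumes "constraints_overlap V lo hi Cs" "(a, b, x) \<in> Cs" "a \<noteq> b"
  shows "constraints_overlap (V - {b}) (lo(a := min (lo a) (lo b - x))) (hi(a := max (hi a) (hi b - x)))
    (merge_constraint a b x ` Cs)"
proof -
  let ?lo = "lo(a := min (lo a) (lo b - x))" and ?hi = "hi(a := max (hi a) (hi b - x))"
  let ?ren = "\<lambda>c. if c = b then a else c" and ?sh = "\<lambda>c. if c = b then x else 0"
  have a: "a \<in> V" "b \<in> V"
    using assms(1,2) by (auto simp: constraints_overlap_def)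
  have lo: "?lo (?ren c) \<le> lo c - ?sh c" and hi: "hi c - ?sh c \<le> ?hi (?ren c)" for c
    using assms(3) by auto
  have ren: "c \<in> V \<Longrightarrow> ?ren c \<in> V - {b}" for c
    using a assms(3) by auto
  show ?thesis
    unfolding constraints_overlap_def
  proof (intro conjI ballI)
    fix c assume "c \<in> V - {b}"
    then show "?lo c \<le> ?hi c"
      using assms(1) a unfolding constraints_overlap_def by auto
  next
    fix t assume "t \<in> merge_constraint a b x ` Cs"
    then obtain c d y where cdy: "(c, d, y) \<in> Cs" and t: "t = (?ren c, ?ren d, y + ?sh c - ?sh d)"
      by (auto simp: merge_constraint_def)
    have "c \<in> V" "d \<in> V" and overlap: "y + lo c \<le> hi d" "lo d \<le> y + hi c"
      using assms(1) cdy by (auto simp: constraints_overlap_def)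
    then show "case t of (c, d, y) \<Rightarrow> c \<in> V - {b} \<and> d \<in> V - {b} \<and> y + ?lo c \<le> ?hi d \<and> ?lo d \<le> y + ?hi c"
      unfolding t prod.case
      using ren[OF \<open>c \<in> V\<close>] ren[OF \<open>d \<in> V\<close>] overlap lo[of c] lo[of d] hi[of c] hi[of d]
      by (intro conjI; (assumption | linarith))
  qed
qed

lemma sum_width_merge_le:
  assumes "finite V" "constraints_overlap V lo hi Cs" "(a, b, x) \<in> Cs" "a \<noteq> b"
  shows "(\<Sum>c\<in>V - {b}. (hi(a := max (hi a) (hi b - x))) c - (lo(a := min (lo a) (lo b - x))) c)
    \<le> (\<Sum>c\<in>V. hi c - lo c)"
proof -
  have a: "a \<in> V" "b \<in> V" and "x + lo a \<le> hi b" "lo b \<le> x + hi a" "lo a \<le> hi a" "lo b \<le> hi b"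
    using assms(2,3) by (auto simp: constraints_overlap_def)
  then have union: "max (hi a) (hi b - x) - min (lo a) (lo b - x) \<le> (hi a - lo a) + (hi b - lo b)"
    by linarith
  let ?w' = "\<lambda>c. (hi(a := max (hi a) (hi b - x))) c - (lo(a := min (lo a) (lo b - x))) c"
  have fin: "finite (V - {b})" "a \<in> V - {b}"
    using assms(1,4) a by auto
  have "(\<Sum>c\<in>V - {b}. ?w' c) = ?w' a + (\<Sum>c\<in>V - {b} - {a}. hi c - lo c)"
  proof -
    have "(\<Sum>c\<in>V - {b} - {a}. ?w' c) = (\<Sum>c\<in>V - {b} - {a}. hi c - lo c)"
      by (rule sum.cong) auto
    then show ?thesis
      using sum.remove[OF fin, of ?w'] by simp
  qed
  moreover have "(\<Sum>c\<in>V. hi c - lo c) = (hi b - lo b) + ((hi a - lo a) + (\<Sum>c\<in>V - {b} - {a}. hi c - lo c))"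
    unfolding sum.remove[OF assms(1) a(2)] sum.remove[OF fin] ..
  ultimately have "(\<Sum>c\<in>V - {b}. ?w' c) - (\<Sum>c\<in>V. hi c - lo c)
      = max (hi a) (hi b - x) - min (lo a) (lo b - x) - ((hi a - lo a) + (hi b - lo b))"
    by simp
  with union show ?thesis
    by linarith
qed

lemma card_placements_loop_constraints_poly:
  assumes "finite V" "constraints_overlap V lo hi Cs" "\<And>a b x. (a, b, x) \<in> Cs \<Longrightarrow> a = b"
  shows "\<exists>P :: real poly. degree P \<le> card V \<and>
    (\<forall>N \<ge> (\<Sum>a\<in>V. hi a - lo a). real (card (placements V lo hi Cs N)) = poly P (of_int N))"
proof (cases "\<forall>(a, b, x)\<in>Cs. x = 0")
  case True
  let ?P = "\<Prod>a\<in>V. [:- of_int (hi a - lo a), 1:] :: real poly"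
  have "degree ?P \<le> card V"
    using degree_prod_sum_le[OF assms(1), of "\<lambda>a. [:- of_int (hi a - lo a), 1:]"] by simp
  moreover have "hi a - lo a \<le> N" if "(\<Sum>a\<in>V. hi a - lo a) \<le> N" "a \<in> V" for a N
  proof -
    have "hi a - lo a \<le> (\<Sum>a\<in>V. hi a - lo a)"
      using assms(1,2) that(2) by (intro member_le_sum) (auto simp: constraints_overlap_def)
    then show ?thesis
      using that(1) by linarith
  qed
  ultimately show ?thesis
    using True by (intro exI[of _ ?P])
      (simp add: placements_loop_constraints[OF assms(3)] card_placements_no_constraints assms(1))
next
  case False
  have "placements V lo hi Cs N = {}" for N
    by (simp only: placements_loop_constraints[OF assms(3)] if_not_P[OF False])
  then show ?thesis
    by (intro exI[of _ 0]) simp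
qed

text \<open>Each constraint between two distinct variables eliminates one of them; once only loops remain,
  the count is a product of linear factors in \<open>N\<close>.\<close>

lemma card_placements_poly:
  assumes "finite V" "constraints_overlap V lo hi Cs"
  shows "\<exists>P :: real poly. degree P + of_bool (\<exists>(a, b, x)\<in>Cs. a \<noteq> b) \<le> card V \<and>
    (\<forall>N \<ge> (\<Sum>a\<in>V. hi a - lo a). real (card (placements V lo hi Cs N)) = poly P (of_int N))"
  using assms
proof (induction "card V" arbitrary: V lo hi Cs rule: less_induct)
  case less
  show ?case
  proof (cases "\<exists>(a, b, x)\<in>Cs. a \<noteq> b")
    case False
    then show ?thesis
      using card_placements_loop_constraints_poly[OF less.prems] by auto
  next
    case True
    then obtain a b x where abx: "(a, b, x) \<in> Cs" "a \<noteq> b"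
      by auto
    then have ab: "a \<in> V" "b \<in> V"
      using less.prems(2) by (auto simp: constraints_overlap_def)
    let ?lo = "lo(a := min (lo a) (lo b - x))" and ?hi = "hi(a := max (hi a) (hi b - x))"
      and ?Cs = "merge_constraint a b x ` Cs"
    have "card (V - {b}) < card V"
      using less.prems(1) ab(2) by (rule card_Diff1_less)
    then have "\<exists>P :: real poly. degree P + of_bool (\<exists>(c, d, y)\<in>?Cs. c \<noteq> d) \<le> card (V - {b}) \<and>
        (\<forall>N \<ge> (\<Sum>c\<in>V - {b}. ?hi c - ?lo c). real (card (placements (V - {b}) ?lo ?hi ?Cs N)) = poly P (of_int N))"
      using less.prems(1) by (intro less.hyps constraints_overlap_merge less.prems(2) abx) simp_all
    then obtain P where deg: "degree P + of_bool (\<exists>(c, d, y)\<in>?Cs. c \<noteq> d) \<le> card (V - {b})"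
      and count: "\<forall>N \<ge> (\<Sum>c\<in>V - {b}. ?hi c - ?lo c).
        real (card (placements (V - {b}) ?lo ?hi ?Cs N)) = poly P (of_int N)"
      by blast
    show ?thesis
    proof (intro exI[of _ P] conjI allI impI)
      show "degree P + of_bool (\<exists>(a, b, x)\<in>Cs. a \<noteq> b) \<le> card V"
        using deg True ab less.prems(1) card_gt_0_iff[of V] by (auto simp: card_Diff_singleton)
    next
      fix N assume "(\<Sum>a\<in>V. hi a - lo a) \<le> N"
      then show "real (card (placements V lo hi Cs N)) = poly P (of_int N)"
        using count sum_width_merge_le[OF less.prems abx] card_placements_merge[OF abx ab]
        by simp
    qed
  qed
qed

section \<open>k-mers as lattice positions\<close>

definition kmer_reach :: "nat \<Rightarrow> bool \<Rightarrow> int" where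
  "kmer_reach k along = (if along then int k - 1 else 0)"

text \<open>The k-mer \<open>(h, i, j)\<close> is horizontal iff \<open>h\<close> and has its first site at \<open>(i, j)\<close>; it covers
  the rows \<open>i..i + kmer_reach k (\<not> h)\<close> and the columns \<open>j..j + kmer_reach k h\<close>. Hence
  \<open>meet_offsets k h h'\<close> is the set of offsets \<open>(i - i', j - j')\<close> at which the k-mers \<open>(h, i, j)\<close>
  and \<open>(h', i', j')\<close> share a site.\<close>

definition kmer_sites :: "nat \<Rightarrow> bool \<times> int \<times> int \<Rightarrow> (nat \<times> nat) set" where
  "kmer_sites k = (\<lambda>(h, i, j). {nat i..nat (i + kmer_reach k (\<not> h))} \<times> {nat j..nat (j + kmer_reach k h)})"

definition kmer_positions :: "nat \<Rightarrow> nat \<Rightarrow> nat \<Rightarrow> (bool \<times> int \<times> int) set" where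
  "kmer_positions k n m =
     {(h, i, j). 1 \<le> i \<and> i + kmer_reach k (\<not> h) \<le> int n \<and> 1 \<le> j \<and> j + kmer_reach k h \<le> int m}"

definition meet_offsets :: "nat \<Rightarrow> bool \<Rightarrow> bool \<Rightarrow> (int \<times> int) set" where
  "meet_offsets k h h' = {- kmer_reach k (\<not> h)..kmer_reach k (\<not> h')} \<times> {- kmer_reach k h..kmer_reach k h'}"

lemma finite_meet_offsets: "finite (meet_offsets k h h')"
  by (simp add: meet_offsets_def)

lemma finite_kmer_positions: "finite (kmer_positions k n m)"
  by (rule finite_subset[of _ "UNIV \<times> {1..int n + 1} \<times> {1..int m + 1}"])
     (auto simp: kmer_positions_def kmer_reach_def split: if_splits)

lemma kmer_sites_nonempty: "k \<ge> 1 \<Longrightarrow> kmer_sites k u \<noteq> {}"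
  by (auto simp: kmer_sites_def kmer_reach_def split: prod.splits)

lemma kmer_sites_of_nat:
  assumes "k \<ge> 1"
  shows "kmer_sites k (h, int i, int j) =
    (if h then {(i, j + t) | t. t < k} else {(i + t, j) | t. t < k})"
proof -
  have "nat (int k - 1) = k - 1" "{j..j + k - 1} = {j..<j + k}" "{i..i + k - 1} = {i..<i + k}"
    using assms by auto
  moreover have "{(i, j + t) | t. t < k} = {i} \<times> {j..<j + k}" "{(i + t, j) | t. t < k} = {i..<i + k} \<times> {j}"
    by auto presburger+
  ultimately show ?thesis
    using assms by (simp add: kmer_sites_def kmer_reach_def nat_add_distrib)
qed

lemma kmer_sites_mem_kmers:
  assumes "k \<ge> 1" "u \<in> kmer_positions k n m"
  shows "kmer_sites k u \<in> kmers k n m"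
proof -
  obtain h i' j' where u: "u = (h, i', j')"
    by (cases u)
  then have "i' = int (nat i')" "j' = int (nat j')"
    using assms(2) by (auto simp: kmer_positions_def)
  then obtain i j where pos: "(h, int i, int j) \<in> kmer_positions k n m" and u_eq: "u = (h, int i, int j)"
    using assms(2) u by metis
  show ?thesis
  proof (cases h)
    case True
    then have "kmer_sites k u = {(i, j + t) | t. t < k}" "1 \<le> i" "i \<le> n" "1 \<le> j" "j + k \<le> m + 1"
      using pos assms(1) unfolding u_eq kmer_sites_of_nat[OF assms(1)] by (auto simp: kmer_positions_def kmer_reach_def)
    then show ?thesis
      unfolding kmers_def by blast
  next
    case False
    then have "kmer_sites k u = {(i + t, j) | t. t < k}" "1 \<le> i" "i + k \<le> n + 1" "1 \<le> j" "j \<le> m"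
      using pos assms(1) unfolding u_eq kmer_sites_of_nat[OF assms(1)] by (auto simp: kmer_positions_def kmer_reach_def)
    then show ?thesis
      unfolding kmers_def by blast
  qed
qed

lemma kmers_eq_image:
  assumes "k \<ge> 1"
  shows "kmers k n m = kmer_sites k ` kmer_positions k n m"
proof (intro equalityI subsetI)
  fix X assume "X \<in> kmers k n m"
  then consider (horizontal) i j where "X = {(i, j + t) | t. t < k}" "1 \<le> i" "i \<le> n" "1 \<le> j" "j + k \<le> m + 1"
    | (vertical) i j where "X = {(i + t, j) | t. t < k}" "1 \<le> i" "i + k \<le> n + 1" "1 \<le> j" "j \<le> m"
    unfolding kmers_def by blast
  then show "X \<in> kmer_sites k ` kmer_positions k n m"
  proof cases
    case horizontal
    then show ?thesis
      using assms kmer_sites_of_nat[OF assms, of True i j]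
      by (intro image_eqI[of _ _ "(True, int i, int j)"]) (auto simp: kmer_positions_def kmer_reach_def)
  next
    case vertical
    then show ?thesis
      using assms kmer_sites_of_nat[OF assms, of False i j]
      by (intro image_eqI[of _ _ "(False, int i, int j)"]) (auto simp: kmer_positions_def kmer_reach_def)
  qed
qed (use kmer_sites_mem_kmers[OF assms] in blast)

lemma nat_intervals_disjoint_iff:
  fixes i i' r r' :: int
  assumes "1 \<le> i" "1 \<le> i'" "0 \<le> r" "0 \<le> r'"
  shows "{nat i..nat (i + r)} \<inter> {nat i'..nat (i' + r')} = {} \<longleftrightarrow> i - i' \<notin> {- r..r'}"
proof -
  have "{nat i..nat (i + r)} \<inter> {nat i'..nat (i' + r')} = {nat (max i i')..nat (min (i + r) (i' + r'))}"
    using assms by (auto simp: nat_le_eq_zle)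
  then show ?thesis
    using assms by (auto simp: nat_le_eq_zle)
qed

lemma kmer_sites_disjoint_iff:
  assumes "k \<ge> 1" "(h, i, j) \<in> kmer_positions k n m" "(h', i', j') \<in> kmer_positions k n m"
  shows "kmer_sites k (h, i, j) \<inter> kmer_sites k (h', i', j') = {} \<longleftrightarrow> (i - i', j - j') \<notin> meet_offsets k h h'"
proof -
  have "0 \<le> kmer_reach k d" for d
    using assms(1) by (simp add: kmer_reach_def)
  moreover have "1 \<le> i" "1 \<le> j" "1 \<le> i'" "1 \<le> j'"
    using assms(2,3) by (auto simp: kmer_positions_def)
  ultimately show ?thesis
    by (simp only: kmer_sites_def meet_offsets_def prod.case Times_Int_Times Times_empty mem_Times_iff
        fst_conv snd_conv nat_intervals_disjoint_iff de_Morgan_conj)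
qed

lemma kmer_reach_eq_iff: "k \<ge> 2 \<Longrightarrow> kmer_reach k d = kmer_reach k d' \<longleftrightarrow> d = d'"
  by (auto simp: kmer_reach_def)

lemma inj_on_kmer_sites:
  assumes "k \<ge> 2"
  shows "inj_on (kmer_sites k) (kmer_positions k n m)"
proof (rule inj_onI)
  fix u u' assume u: "u \<in> kmer_positions k n m" and u': "u' \<in> kmer_positions k n m"
    and eq: "kmer_sites k u = kmer_sites k u'"
  obtain h i j h' i' j' where uu: "u = (h, i, j)" "u' = (h', i', j')"
    by (cases u, cases u')
  have reach: "0 \<le> kmer_reach k d" for d
    using assms by (simp add: kmer_reach_def)
  then have "nat i = nat i' \<and> nat (i + kmer_reach k (\<not> h)) = nat (i' + kmer_reach k (\<not> h')) \<and>
      nat j = nat j' \<and> nat (j + kmer_reach k h) = nat (j' + kmer_reach k h')"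
    using eq u u' unfolding uu kmer_sites_def kmer_positions_def
    by (auto simp: times_eq_iff nat_le_eq_zle)
  moreover have "0 \<le> i" "0 \<le> i'" "0 \<le> j" "0 \<le> j'"
    using u u' unfolding uu kmer_positions_def by auto
  ultimately have "i = i'" "j = j'" "kmer_reach k h = kmer_reach k h'"
    using reach[of h] reach[of h'] reach[of "\<not> h"] reach[of "\<not> h'"] by (simp_all add: eq_nat_nat_iff)
  then show "u = u'"
    using kmer_reach_eq_iff[OF assms] uu by simp
qed

section \<open>Ordered configurations\<close>

lemma card_distinct_lists_with_set_in:
  assumes "finite \<C>" "\<And>C. C \<in> \<C> \<Longrightarrow> finite C \<and> card C = s"
  shows "card {xs. distinct xs \<and> set xs \<in> \<C>} = fact s * card \<C>"
proof -
  have "{xs. distinct xs \<and> set xs \<in> \<C>} = (\<Union>C\<in>\<C>. permutations_of_set C)"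
    unfolding permutations_of_set_def by blast
  also have "card \<dots> = (\<Sum>C\<in>\<C>. card (permutations_of_set C))"
  proof (rule card_UN_disjoint)
    show "\<forall>C\<in>\<C>. finite (permutations_of_set C)"
      by (simp add: finite_permutations_of_set)
    show "\<forall>C\<in>\<C>. \<forall>D\<in>\<C>. C \<noteq> D \<longrightarrow> permutations_of_set C \<inter> permutations_of_set D = {}"
      by (auto simp: permutations_of_set_def)
  qed (fact assms(1))
  also have "\<dots> = fact s * card \<C>"
    using assms by simp
  finally show ?thesis .
qed

lemma inj_on_map_tuple:
  assumes "inj_on f P"
  shows "inj_on (\<lambda>u. map (f \<circ> u) [0..<s]) ({..<s} \<rightarrow>\<^sub>E P)"
proof (rule inj_onI)
  fix u v assume u: "u \<in> {..<s} \<rightarrow>\<^sub>E P" and v: "v \<in> {..<s} \<rightarrow>\<^sub>E P"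
    and eq: "map (f \<circ> u) [0..<s] = map (f \<circ> v) [0..<s]"
  have "f (u a) = f (v a)" if "a < s" for a
    using arg_cong[OF eq, of "\<lambda>xs. xs ! a"] that by simp
  moreover have "u a \<in> P" "v a \<in> P" if "a < s" for a
    using u v that by auto
  ultimately have "u a = v a" if "a < s" for a
    using that assms by (meson inj_onD)
  with u v show "u = v"
    by (auto intro: PiE_ext)
qed

lemma map_disjoint_tuple_in:
  assumes "\<And>p. p \<in> P \<Longrightarrow> f p \<noteq> {}"
    and u: "u \<in> {..<s} \<rightarrow>\<^sub>E P" "\<forall>a<s. \<forall>b<s. a \<noteq> b \<longrightarrow> f (u a) \<inter> f (u b) = {}"
  shows "distinct (map (f \<circ> u) [0..<s]) \<and> set (map (f \<circ> u) [0..<s]) \<subseteq> f ` P \<and>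
    card (set (map (f \<circ> u) [0..<s])) = s \<and>
    (\<forall>A\<in>set (map (f \<circ> u) [0..<s]). \<forall>B\<in>set (map (f \<circ> u) [0..<s]). A \<noteq> B \<longrightarrow> A \<inter> B = {})"
proof -
  have "f (u a) \<noteq> f (u b)" if "a < s" "b < s" "a \<noteq> b" for a b
    using u that assms(1)[of "u a"] by fastforce
  then have "distinct (map (f \<circ> u) [0..<s])"
    by (simp add: distinct_conv_nth)
  moreover have set_eq: "set (map (f \<circ> u) [0..<s]) = (f \<circ> u) ` {..<s}"
    by (auto simp: atLeast0LessThan)
  moreover have "card (set (map (f \<circ> u) [0..<s])) = s"
    using calculation(1) distinct_card by fastforce
  moreover have "set (map (f \<circ> u) [0..<s]) \<subseteq> f ` P"
    using u unfolding set_eq by auto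
  moreover have "\<forall>A\<in>set (map (f \<circ> u) [0..<s]). \<forall>B\<in>set (map (f \<circ> u) [0..<s]). A \<noteq> B \<longrightarrow> A \<inter> B = {}"
    using u unfolding set_eq by auto
  ultimately show ?thesis
    by blast
qed

lemma disjoint_tuple_of_list:
  assumes "distinct xs" "set xs \<subseteq> f ` P" "card (set xs) = s"
    and "\<forall>A\<in>set xs. \<forall>B\<in>set xs. A \<noteq> B \<longrightarrow> A \<inter> B = {}"
  obtains u where "u \<in> {..<s} \<rightarrow>\<^sub>E P" "\<forall>a<s. \<forall>b<s. a \<noteq> b \<longrightarrow> f (u a) \<inter> f (u b) = {}"
    "map (f \<circ> u) [0..<s] = xs"
proof -
  have len: "length xs = s"
    using assms(1,3) distinct_card by fastforce
  define u where "u = (\<lambda>a\<in>{..<s}. inv_into P f (xs ! a))"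
  have "xs ! a \<in> f ` P" if "a < s" for a
    using assms(2) len that by auto
  then have fu: "f (u a) = xs ! a" and uP: "u a \<in> P" if "a < s" for a
    using that by (simp_all add: u_def f_inv_into_f inv_into_into)
  have disj: "xs ! a \<inter> xs ! b = {}" if "a < s" "b < s" "a \<noteq> b" for a b
    using assms(1,4) that len by (auto simp: nth_eq_iff_index_eq)
  show ?thesis
  proof (rule that)
    show "u \<in> {..<s} \<rightarrow>\<^sub>E P"
      using uP by (auto simp: u_def)
    show "\<forall>a<s. \<forall>b<s. a \<noteq> b \<longrightarrow> f (u a) \<inter> f (u b) = {}"
      using fu disj by simp
    show "map (f \<circ> u) [0..<s] = xs"
      using fu len by (intro nth_equalityI) simp_all
  qed
qed

lemma card_disjoint_tuples:
  fixes f :: "'p \<Rightarrow> 'a set"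
  assumes "finite P" "inj_on f P" "\<And>p. p \<in> P \<Longrightarrow> f p \<noteq> {}"
  shows "card {u \<in> {..<s} \<rightarrow>\<^sub>E P. \<forall>a<s. \<forall>b<s. a \<noteq> b \<longrightarrow> f (u a) \<inter> f (u b) = {}}
     = fact s * card {C. C \<subseteq> f ` P \<and> card C = s \<and> (\<forall>A\<in>C. \<forall>B\<in>C. A \<noteq> B \<longrightarrow> A \<inter> B = {})}"
    (is "card ?T = fact s * card ?\<C>")
proof -
  let ?F = "\<lambda>u. map (f \<circ> u) [0..<s]"
  have "?\<C> \<subseteq> Pow (f ` P)"
    by (intro subsetI) simp
  then have "finite ?\<C>"
    using assms(1) by (meson finite_Pow_iff finite_imageI finite_subset)
  moreover have "finite C \<and> card C = s" if "C \<in> ?\<C>" for C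
    using that finite_subset[OF _ finite_imageI[OF assms(1), of f]] by simp
  ultimately have lists: "card {xs. distinct xs \<and> set xs \<in> ?\<C>} = fact s * card ?\<C>"
    by (rule card_distinct_lists_with_set_in)
  have image: "?F ` ?T = {xs. distinct xs \<and> set xs \<in> ?\<C>}"
  proof (intro equalityI subsetI)
    fix xs assume "xs \<in> ?F ` ?T"
    then obtain u where "u \<in> {..<s} \<rightarrow>\<^sub>E P" "\<forall>a<s. \<forall>b<s. a \<noteq> b \<longrightarrow> f (u a) \<inter> f (u b) = {}"
      and "xs = ?F u"
      by blast
    then show "xs \<in> {xs. distinct xs \<and> set xs \<in> ?\<C>}"
      using map_disjoint_tuple_in[OF assms(3)] by simp
  next
    fix xs assume "xs \<in> {xs. distinct xs \<and> set xs \<in> ?\<C>}"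
    then have "distinct xs" "set xs \<subseteq> f ` P" "card (set xs) = s"
      "\<forall>A\<in>set xs. \<forall>B\<in>set xs. A \<noteq> B \<longrightarrow> A \<inter> B = {}"
      by simp_all
    then obtain u where "u \<in> ?T" "?F u = xs"
      by (rule disjoint_tuple_of_list) blast
    then show "xs \<in> ?F ` ?T"
      by blast
  qed
  have "inj_on ?F ?T"
    using inj_on_map_tuple[OF assms(2)] by (rule inj_on_subset) blast
  then have "card ?T = card (?F ` ?T)"
    by (rule card_image[symmetric])
  then show ?thesis
    unfolding image lists .
qed

definition index_pairs :: "nat \<Rightarrow> (nat \<times> nat) set" where
  "index_pairs s = {(a, b). a < b \<and> b < s}"

lemma finite_index_pairs: "finite (index_pairs s)"
  by (rule finite_subset[of _ "{..<s} \<times> {..<s}"]) (auto simp: index_pairs_def)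

definition ordered_configs :: "nat \<Rightarrow> nat \<Rightarrow> nat \<Rightarrow> nat \<Rightarrow> ((nat \<Rightarrow> bool) \<times> (nat \<Rightarrow> int) \<times> (nat \<Rightarrow> int)) set" where
  "ordered_configs k s n m = {(h, r, c).
     h \<in> {..<s} \<rightarrow>\<^sub>E UNIV \<and> r \<in> {..<s} \<rightarrow>\<^sub>E UNIV \<and> c \<in> {..<s} \<rightarrow>\<^sub>E UNIV \<and>
     (\<forall>a<s. (h a, r a, c a) \<in> kmer_positions k n m) \<and>
     (\<forall>(a, b)\<in>index_pairs s. (r a - r b, c a - c b) \<notin> meet_offsets k (h a) (h b))}"

lemma all_index_pairs_iff:
  assumes "\<And>a b. R a b \<longleftrightarrow> R b a"
  shows "(\<forall>a<s. \<forall>b<s. a \<noteq> b \<longrightarrow> R a b) \<longleftrightarrow> (\<forall>(a, b)\<in>index_pairs s. R a b)"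
proof
  assume "\<forall>a<s. \<forall>b<s. a \<noteq> b \<longrightarrow> R a b"
  then show "\<forall>(a, b)\<in>index_pairs s. R a b"
    by (auto simp: index_pairs_def)
next
  assume pairs: "\<forall>(a, b)\<in>index_pairs s. R a b"
  show "\<forall>a<s. \<forall>b<s. a \<noteq> b \<longrightarrow> R a b"
  proof (intro allI impI)
    fix a b assume "a < s" "b < s" "a \<noteq> b"
    then consider "a < b" | "b < a"
      by linarith
    then show "R a b"
      using pairs assms[of a b] \<open>a < s\<close> \<open>b < s\<close> by cases (auto simp: index_pairs_def)
  qed
qed

lemma pairwise_disjoint_kmer_sites_iff:
  assumes "k \<ge> 1" "\<forall>a<s. (h a, r a, c a) \<in> kmer_positions k n m"
  shows "(\<forall>a<s. \<forall>b<s. a \<noteq> b \<longrightarrow> kmer_sites k (h a, r a, c a) \<inter> kmer_sites k (h b, r b, c b) = {})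
    \<longleftrightarrow> (\<forall>(a, b)\<in>index_pairs s. (r a - r b, c a - c b) \<notin> meet_offsets k (h a) (h b))"
proof -
  have "(\<forall>a<s. \<forall>b<s. a \<noteq> b \<longrightarrow> kmer_sites k (h a, r a, c a) \<inter> kmer_sites k (h b, r b, c b) = {})
    \<longleftrightarrow> (\<forall>(a, b)\<in>index_pairs s. kmer_sites k (h a, r a, c a) \<inter> kmer_sites k (h b, r b, c b) = {})"
    by (rule all_index_pairs_iff) (simp add: Int_commute)
  also have "\<dots> \<longleftrightarrow> (\<forall>(a, b)\<in>index_pairs s. (r a - r b, c a - c b) \<notin> meet_offsets k (h a) (h b))"
  proof (rule ball_cong[OF refl], clarify)
    fix a b assume "(a, b) \<in> index_pairs s"
    then show "kmer_sites k (h a, r a, c a) \<inter> kmer_sites k (h b, r b, c b) = {} \<longleftrightarrow>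
        (r a - r b, c a - c b) \<notin> meet_offsets k (h a) (h b)"
      using assms(2) by (intro kmer_sites_disjoint_iff[OF assms(1)]) (auto simp: index_pairs_def)
  qed
  finally show ?thesis .
qed

lemma ordered_configs_iff:
  assumes "k \<ge> 1"
  shows "(h, r, c) \<in> ordered_configs k s n m \<longleftrightarrow>
    h \<in> {..<s} \<rightarrow>\<^sub>E UNIV \<and> r \<in> {..<s} \<rightarrow>\<^sub>E UNIV \<and> c \<in> {..<s} \<rightarrow>\<^sub>E UNIV \<and>
    (\<lambda>a\<in>{..<s}. (h a, r a, c a)) \<in> {u \<in> {..<s} \<rightarrow>\<^sub>E kmer_positions k n m.
      \<forall>a<s. \<forall>b<s. a \<noteq> b \<longrightarrow> kmer_sites k (u a) \<inter> kmer_sites k (u b) = {}}"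
proof -
  have "(\<lambda>a\<in>{..<s}. (h a, r a, c a)) \<in> {..<s} \<rightarrow>\<^sub>E kmer_positions k n m \<longleftrightarrow>
      (\<forall>a<s. (h a, r a, c a) \<in> kmer_positions k n m)"
    by (auto simp: restrict_PiE_iff)
  then show ?thesis
    using pairwise_disjoint_kmer_sites_iff[OF assms, of s h r c n m]
    by (auto simp: ordered_configs_def)
qed

lemma bij_betw_ordered_configs_tuples:
  assumes "k \<ge> 1"
  shows "bij_betw (\<lambda>(h, r, c). \<lambda>a\<in>{..<s}. (h a, r a, c a)) (ordered_configs k s n m)
    {u \<in> {..<s} \<rightarrow>\<^sub>E kmer_positions k n m. \<forall>a<s. \<forall>b<s. a \<noteq> b \<longrightarrow> kmer_sites k (u a) \<inter> kmer_sites k (u b) = {}}"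
    (is "bij_betw ?f _ ?T")
proof -
  let ?g = "\<lambda>u. (\<lambda>a\<in>{..<s}. fst (u a), \<lambda>a\<in>{..<s}. fst (snd (u a)), \<lambda>a\<in>{..<s}. snd (snd (u a)))"
  have fg: "?f (?g u) = u" if "u \<in> ?T" for u
    using that by (auto simp: fun_eq_iff PiE_def extensional_def)
  show ?thesis
  proof (rule bij_betw_byWitness[where f' = ?g])
    show "\<forall>x\<in>ordered_configs k s n m. ?g (?f x) = x"
      by (auto simp: ordered_configs_def fun_eq_iff PiE_def extensional_def)
    show "\<forall>u\<in>?T. ?f (?g u) = u"
      using fg by blast
    show "?f ` ordered_configs k s n m \<subseteq> ?T"
    proof (intro subsetI)
      fix u assume "u \<in> ?f ` ordered_configs k s n m"
      then obtain h r c where "(h, r, c) \<in> ordered_configs k s n m" "u = ?f (h, r, c)"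
        by auto
      then show "u \<in> ?T"
        using ordered_configs_iff[OF assms, of h r c] by simp
    qed
    show "?g ` ?T \<subseteq> ordered_configs k s n m"
    proof (intro subsetI)
      fix x assume "x \<in> ?g ` ?T"
      then obtain u where "u \<in> ?T" "x = ?g u"
        by blast
      then show "x \<in> ordered_configs k s n m"
        using fg[of u] by (simp add: ordered_configs_iff[OF assms])
    qed
  qed
qed

lemma card_ordered_configs:
  assumes "k \<ge> 2"
  shows "card (ordered_configs k s n m) = fact s * kmer_count k s n m"
proof -
  have k: "k \<ge> 1"
    using assms by simp
  have "card (ordered_configs k s n m) = card {u \<in> {..<s} \<rightarrow>\<^sub>E kmer_positions k n m.
      \<forall>a<s. \<forall>b<s. a \<noteq> b \<longrightarrow> kmer_sites k (u a) \<inter> kmer_sites k (u b) = {}}"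
    by (rule bij_betw_same_card[OF bij_betw_ordered_configs_tuples[OF k]])
  also have "\<dots> = fact s * kmer_count k s n m"
    using assms unfolding kmer_count_def kmers_eq_image[OF k]
    by (simp add: card_disjoint_tuples finite_kmer_positions inj_on_kmer_sites kmer_sites_nonempty)
  finally show ?thesis .
qed

section \<open>Inclusion-exclusion over the pairs of k-mers\<close>

lemma prod_of_bool_eq:
  "finite A \<Longrightarrow> (\<Prod>x\<in>A. of_bool (P x)) = (of_bool (\<forall>x\<in>A. P x) :: 'a::comm_semiring_1)"
  by (induction rule: finite_induct) auto

lemma prod_sign_eq:
  "finite A \<Longrightarrow> (\<Prod>x\<in>A. if P x then 1 else -1) = ((-1) ^ card {x\<in>A. \<not> P x} :: 'a::comm_ring_1)"
proof -
  assume "finite A"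
  moreover have "A \<inter> - {x. P x} = {x\<in>A. \<not> P x}"
    by auto
  ultimately show ?thesis
    by (simp add: prod.If_cases)
qed

text \<open>Expanding \<open>\<Prod>(a, b). (1 - [k-mers a and b meet])\<close> and writing each \<open>[meet]\<close> as a sum over the
  offsets at which the two k-mers meet gives a sum over patterns \<open>\<phi>\<close>: \<open>\<phi> (a, b) = None\<close> selects the
  term 1, \<open>\<phi> (a, b) = Some w\<close> the term \<open>-[offset of a and b = w]\<close>. The constraints of a pattern
  split into independent row and column constraints.\<close>

definition overlap_choices :: "nat \<Rightarrow> (nat \<Rightarrow> bool) \<Rightarrow> nat \<times> nat \<Rightarrow> (int \<times> int) option set" where
  "overlap_choices k h = (\<lambda>(a, b). insert None (Some ` meet_offsets k (h a) (h b)))"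

definition pattern_sign :: "nat \<Rightarrow> (nat \<times> nat \<Rightarrow> (int \<times> int) option) \<Rightarrow> real" where
  "pattern_sign s \<phi> = (-1) ^ card {e \<in> index_pairs s. \<phi> e \<noteq> None}"

definition pattern_constraints ::
    "nat \<Rightarrow> (nat \<times> nat \<Rightarrow> (int \<times> int) option) \<Rightarrow> (int \<times> int \<Rightarrow> int) \<Rightarrow> (nat \<times> nat \<times> int) set" where
  "pattern_constraints s \<phi> \<pi> = {(a, b, \<pi> w) | a b w. (a, b) \<in> index_pairs s \<and> \<phi> (a, b) = Some w}"

text \<open>\<open>axis_count k s d \<phi> \<pi>\<close> counts the positions along one axis that satisfy the constraints of
  \<open>\<phi>\<close>: rows use \<open>d a = (\<not> h a)\<close> and \<open>\<pi> = fst\<close>, columns use \<open>d a = h a\<close> and \<open>\<pi> = snd\<close>.\<close>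

definition axis_count ::
    "nat \<Rightarrow> nat \<Rightarrow> (nat \<Rightarrow> bool) \<Rightarrow> (nat \<times> nat \<Rightarrow> (int \<times> int) option) \<Rightarrow> (int \<times> int \<Rightarrow> int) \<Rightarrow> int \<Rightarrow> nat" where
  "axis_count k s d \<phi> \<pi> N =
     card (placements {..<s} (\<lambda>_. 0) (\<lambda>a. kmer_reach k (d a)) (pattern_constraints s \<phi> \<pi>) N)"

lemma sum_overlap_choices:
  "(\<Sum>z\<in>overlap_choices k h (a, b). case z of None \<Rightarrow> 1 | Some w \<Rightarrow> - of_bool (d = w))
     = (of_bool (d \<notin> meet_offsets k (h a) (h b)) :: real)"
proof -
  have "(\<Sum>w\<in>meet_offsets k (h a) (h b). of_bool (d = w)) = (of_bool (d \<in> meet_offsets k (h a) (h b)) :: real)"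
    by (simp add: of_bool_def sum.delta' finite_meet_offsets)
  then show ?thesis
    by (simp add: overlap_choices_def sum.reindex finite_meet_offsets sum_negf)
qed

lemma prod_pattern_weights:
  "(\<Prod>e\<in>index_pairs s. case \<phi> e of None \<Rightarrow> 1
      | Some w \<Rightarrow> - of_bool ((r (fst e) - r (snd e), c (fst e) - c (snd e)) = w))
   = pattern_sign s \<phi> * of_bool (\<forall>(a, b, x)\<in>pattern_constraints s \<phi> fst. r a - r b = x)
       * of_bool (\<forall>(a, b, y)\<in>pattern_constraints s \<phi> snd. c a - c b = y)"
proof -
  have "(\<Prod>e\<in>index_pairs s. case \<phi> e of None \<Rightarrow> 1
      | Some w \<Rightarrow> - of_bool ((r (fst e) - r (snd e), c (fst e) - c (snd e)) = w))
    = (\<Prod>(a, b)\<in>index_pairs s. (if \<phi> (a, b) = None then 1 else -1)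
         * of_bool (\<forall>w. \<phi> (a, b) = Some w \<longrightarrow> (r a - r b, c a - c b) = w) :: real)"
    by (intro prod.cong refl) (auto split: option.splits)
  also have "\<dots> = pattern_sign s \<phi> *
      of_bool (\<forall>(a, b)\<in>index_pairs s. \<forall>w. \<phi> (a, b) = Some w \<longrightarrow> (r a - r b, c a - c b) = w)"
    by (simp add: prod.distrib case_prod_beta prod_sign_eq prod_of_bool_eq finite_index_pairs pattern_sign_def)
  also have "(\<forall>(a, b)\<in>index_pairs s. \<forall>w. \<phi> (a, b) = Some w \<longrightarrow> (r a - r b, c a - c b) = w) \<longleftrightarrow>
      (\<forall>(a, b, x)\<in>pattern_constraints s \<phi> fst. r a - r b = x) \<and> (\<forall>(a, b, y)\<in>pattern_constraints s \<phi> snd. c a - c b = y)"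
    by (auto simp: pattern_constraints_def)
  finally show ?thesis
    by simp
qed

lemma of_bool_nonmeet_expand:
  "of_bool (\<forall>(a, b)\<in>index_pairs s. (r a - r b, c a - c b) \<notin> meet_offsets k (h a) (h b))
   = (\<Sum>\<phi>\<in>Pi\<^sub>E (index_pairs s) (overlap_choices k h). pattern_sign s \<phi>
        * of_bool (\<forall>(a, b, x)\<in>pattern_constraints s \<phi> fst. r a - r b = x)
        * of_bool (\<forall>(a, b, y)\<in>pattern_constraints s \<phi> snd. c a - c b = y) :: real)"
proof -
  let ?f = "\<lambda>e z. case z of None \<Rightarrow> (1::real)
    | Some w \<Rightarrow> - of_bool ((r (fst e) - r (snd e), c (fst e) - c (snd e)) = w)"
  have "of_bool (\<forall>(a, b)\<in>index_pairs s. (r a - r b, c a - c b) \<notin> meet_offsets k (h a) (h b))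
      = (\<Prod>e\<in>index_pairs s. of_bool (case e of (a, b) \<Rightarrow> (r a - r b, c a - c b) \<notin> meet_offsets k (h a) (h b)) :: real)"
    by (rule prod_of_bool_eq[symmetric, OF finite_index_pairs])
  also have "\<dots> = (\<Prod>e\<in>index_pairs s. \<Sum>z\<in>overlap_choices k h e. ?f e z)"
  proof (rule prod.cong[OF refl])
    fix e :: "nat \<times> nat"
    obtain a b where e: "e = (a, b)"
      by fastforce
    show "of_bool (case e of (a, b) \<Rightarrow> (r a - r b, c a - c b) \<notin> meet_offsets k (h a) (h b))
        = (\<Sum>z\<in>overlap_choices k h e. ?f e z)"
      unfolding e by (simp add: sum_overlap_choices)
  qed
  also have "\<dots> = (\<Sum>\<phi>\<in>Pi\<^sub>E (index_pairs s) (overlap_choices k h). \<Prod>e\<in>index_pairs s. ?f e (\<phi> e))"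
    by (rule prod_sum_PiE) (simp_all add: finite_index_pairs overlap_choices_def finite_meet_offsets split: prod.splits)
  also have "\<dots> = (\<Sum>\<phi>\<in>Pi\<^sub>E (index_pairs s) (overlap_choices k h). pattern_sign s \<phi>
        * of_bool (\<forall>(a, b, x)\<in>pattern_constraints s \<phi> fst. r a - r b = x)
        * of_bool (\<forall>(a, b, y)\<in>pattern_constraints s \<phi> snd. c a - c b = y))"
    by (simp only: prod_pattern_weights)
  finally show ?thesis .
qed

lemma sum_Times_mult:
  fixes f g :: "_ \<Rightarrow> 'a::comm_semiring_1"
  shows "(\<Sum>x\<in>A \<times> B. a * f (fst x) * g (snd x)) = a * (\<Sum>r\<in>A. f r) * (\<Sum>c\<in>B. g c)"
proof -
  have "(\<Sum>x\<in>A \<times> B. a * f (fst x) * g (snd x)) = (\<Sum>r\<in>A. \<Sum>c\<in>B. a * f r * g c)"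
    by (simp only: sum.cartesian_product case_prod_unfold)
  also have "\<dots> = a * ((\<Sum>r\<in>A. f r) * (\<Sum>c\<in>B. g c))"
    by (simp only: sum_product) (simp add: sum_distrib_left mult.assoc)
  finally show ?thesis
    by (simp add: mult.assoc)
qed

lemma card_ordered_configs_expand:
  "real (card (ordered_configs k s n m)) =
    (\<Sum>h\<in>{..<s} \<rightarrow>\<^sub>E UNIV. \<Sum>\<phi>\<in>Pi\<^sub>E (index_pairs s) (overlap_choices k h). pattern_sign s \<phi>
       * real (axis_count k s (\<lambda>a. \<not> h a) \<phi> fst (int n)) * real (axis_count k s h \<phi> snd (int m)))"
proof -
  let ?R = "\<lambda>h. placements {..<s} (\<lambda>_. 0) (\<lambda>a. kmer_reach k (\<not> h a)) {} (int n)"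
  let ?C = "\<lambda>h. placements {..<s} (\<lambda>_. 0) (\<lambda>a. kmer_reach k (h a)) {} (int m)"
  let ?ok = "\<lambda>h r c. \<forall>(a, b)\<in>index_pairs s. (r a - r b, c a - c b) \<notin> meet_offsets k (h a) (h b)"
  let ?row = "\<lambda>\<phi> r. \<forall>(a, b, x)\<in>pattern_constraints s \<phi> fst. r a - r b = x"
  let ?col = "\<lambda>\<phi> c. \<forall>(a, b, y)\<in>pattern_constraints s \<phi> snd. c a - c b = y"
  have fin: "finite (?R h)" "finite (?C h)" for h
    by (simp_all add: finite_placements)
  have "ordered_configs k s n m =
      Sigma ({..<s} \<rightarrow>\<^sub>E UNIV) (\<lambda>h. {x \<in> ?R h \<times> ?C h. ?ok h (fst x) (snd x)})"
    by (auto simp: ordered_configs_def placements_def kmer_positions_def)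
  then have "real (card (ordered_configs k s n m))
      = (\<Sum>h\<in>{..<s} \<rightarrow>\<^sub>E UNIV. \<Sum>x\<in>?R h \<times> ?C h. of_bool (?ok h (fst x) (snd x)))"
    using fin by (simp add: card_SigmaI finite_PiE of_nat_sum Int_def)
  also have "\<dots> = (\<Sum>h\<in>{..<s} \<rightarrow>\<^sub>E UNIV. \<Sum>x\<in>?R h \<times> ?C h. \<Sum>\<phi>\<in>Pi\<^sub>E (index_pairs s) (overlap_choices k h).
      pattern_sign s \<phi> * of_bool (?row \<phi> (fst x)) * of_bool (?col \<phi> (snd x)))"
    by (simp only: of_bool_nonmeet_expand)
  also have "\<dots> = (\<Sum>h\<in>{..<s} \<rightarrow>\<^sub>E UNIV. \<Sum>\<phi>\<in>Pi\<^sub>E (index_pairs s) (overlap_choices k h).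
      \<Sum>x\<in>?R h \<times> ?C h. pattern_sign s \<phi> * of_bool (?row \<phi> (fst x)) * of_bool (?col \<phi> (snd x)))"
    by (intro sum.cong refl sum.swap)
  also have "\<dots> = (\<Sum>h\<in>{..<s} \<rightarrow>\<^sub>E UNIV. \<Sum>\<phi>\<in>Pi\<^sub>E (index_pairs s) (overlap_choices k h).
      pattern_sign s \<phi> * (\<Sum>r\<in>?R h. of_bool (?row \<phi> r)) * (\<Sum>c\<in>?C h. of_bool (?col \<phi> c)))"
    by (rule sum.cong[OF refl], rule sum.cong[OF refl], rule sum_Times_mult)
  also have "\<dots> = (\<Sum>h\<in>{..<s} \<rightarrow>\<^sub>E UNIV. \<Sum>\<phi>\<in>Pi\<^sub>E (index_pairs s) (overlap_choices k h). pattern_sign s \<phi>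
       * real (axis_count k s (\<lambda>a. \<not> h a) \<phi> fst (int n)) * real (axis_count k s h \<phi> snd (int m)))"
    by (simp only: axis_count_def card_placements_eq_sum finite_lessThan)
  finally show ?thesis .
qed

section \<open>The diagonal difference\<close>

lemma pattern_offset_meets:
  assumes "\<phi> \<in> Pi\<^sub>E (index_pairs s) (overlap_choices k h)" "(a, b) \<in> index_pairs s" "\<phi> (a, b) = Some w"
  shows "w \<in> meet_offsets k (h a) (h b)"
  using PiE_mem[OF assms(1,2)] assms(3) by (auto simp: overlap_choices_def)

lemma constraints_overlap_pattern:
  assumes "k \<ge> 1"
    and "\<And>a b w. (a, b) \<in> index_pairs s \<Longrightarrow> \<phi> (a, b) = Some w \<Longrightarrow>
      \<pi> w \<in> {- kmer_reach k (d a)..kmer_reach k (d b)}"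
  shows "constraints_overlap {..<s} (\<lambda>_. 0) (\<lambda>a. kmer_reach k (d a)) (pattern_constraints s \<phi> \<pi>)"
  unfolding constraints_overlap_def
proof (intro conjI ballI)
  fix a
  show "0 \<le> kmer_reach k (d a)"
    using assms(1) by (simp add: kmer_reach_def)
next
  fix t assume "t \<in> pattern_constraints s \<phi> \<pi>"
  then obtain a b w where t: "t = (a, b, \<pi> w)" "(a, b) \<in> index_pairs s" "\<phi> (a, b) = Some w"
    by (auto simp: pattern_constraints_def)
  then have "\<pi> w \<in> {- kmer_reach k (d a)..kmer_reach k (d b)}"
    using assms(2) by blast
  then show "case t of (a, b, x) \<Rightarrow> a \<in> {..<s} \<and> b \<in> {..<s} \<and>
      x + 0 \<le> kmer_reach k (d b) \<and> 0 \<le> x + kmer_reach k (d a)"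
    using t(1,2) by (auto simp: index_pairs_def)
qed

lemma sum_kmer_reach_le: "k \<ge> 1 \<Longrightarrow> (\<Sum>a<s. kmer_reach k (d a) - 0) \<le> int s * (int k - 1)"
  using sum_bounded_above[of "{..<s}" "\<lambda>a. kmer_reach k (d a) - 0" "int k - 1"]
  by (simp add: kmer_reach_def)

lemma axis_count_empty_pattern:
  assumes "k \<ge> 1" "\<forall>e\<in>index_pairs s. \<phi> e = None" "int s * (int k - 1) \<le> N"
  shows "real (axis_count k s d \<phi> \<pi> N) = poly (\<Prod>a<s. [:- of_int (kmer_reach k (d a) - 0), 1:]) (of_int N)"
proof -
  have "pattern_constraints s \<phi> \<pi> = {}"
    using assms(2) by (auto simp: pattern_constraints_def)
  moreover have "kmer_reach k (d a) - 0 \<le> N" if "a < s" for a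
  proof -
    have "1 * (int k - 1) \<le> int s * (int k - 1)"
      by (rule mult_right_mono) (use that assms(1) in auto)
    then show ?thesis
      using assms(1,3) by (simp add: kmer_reach_def)
  qed
  ultimately show ?thesis
    by (simp add: axis_count_def card_placements_no_constraints del: diff_0_right)
qed

lemma axis_count_poly:
  assumes "k \<ge> 1"
    and "\<And>a b w. (a, b) \<in> index_pairs s \<Longrightarrow> \<phi> (a, b) = Some w \<Longrightarrow>
      \<pi> w \<in> {- kmer_reach k (d a)..kmer_reach k (d b)}"
  shows "\<exists>P :: real poly.
    (if \<forall>e\<in>index_pairs s. \<phi> e = None then degree P = s \<and> lead_coeff P = 1 else degree P < s) \<and>
    (\<forall>N \<ge> int s * (int k - 1). real (axis_count k s d \<phi> \<pi> N) = poly P (of_int N))"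
proof (cases "\<forall>e\<in>index_pairs s. \<phi> e = None")
  case True
  let ?P = "\<Prod>a<s. [:- of_int (kmer_reach k (d a) - 0), 1:] :: real poly"
  have "degree ?P = s"
    by (simp add: degree_prod_eq_sum_degree)
  moreover have "lead_coeff ?P = 1"
    using lead_coeff_prod[of "\<lambda>a. [:- of_int (kmer_reach k (d a) - 0), 1:]" "{..<s}"] by simp
  ultimately show ?thesis
    using True axis_count_empty_pattern[OF assms(1) True] by (intro exI[of _ ?P]) simp
next
  case False
  then obtain a b w where "(a, b) \<in> index_pairs s" "\<phi> (a, b) = Some w"
    by auto
  then have "(a, b, \<pi> w) \<in> pattern_constraints s \<phi> \<pi>" "a \<noteq> b"
    unfolding pattern_constraints_def index_pairs_def by blast+
  then have proper: "\<exists>(a, b, x)\<in>pattern_constraints s \<phi> \<pi>. a \<noteq> b"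
    by blast
  have overlap: "constraints_overlap {..<s} (\<lambda>_. 0) (\<lambda>a. kmer_reach k (d a)) (pattern_constraints s \<phi> \<pi>)"
    by (rule constraints_overlap_pattern) (use assms in auto)
  obtain P :: "real poly" where "degree P + 1 \<le> s" and
    "\<forall>N \<ge> (\<Sum>a<s. kmer_reach k (d a) - 0). real (axis_count k s d \<phi> \<pi> N) = poly P (of_int N)"
    using card_placements_poly[OF finite_lessThan overlap] proper by (auto simp: axis_count_def)
  then show ?thesis
    using False sum_kmer_reach_le[OF assms(1), where s=s and d=d] by (intro exI[of _ P]) auto
qed

lemma poly_at_diagonal_offset:
  fixes P :: "real poly"
  assumes "k \<ge> 1" "n \<ge> (k + 1) * s" "i \<le> 2 * s"
    and "\<forall>N \<ge> int s * (int k - 1). real (f N) = poly P (of_int N)"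
  shows "real (f (int (n - i))) = poly P (real n - real i)"
proof -
  have "2 * s \<le> (k + 1) * s"
    using assms(1) by simp
  then have "i \<le> n"
    using assms(2,3) by linarith
  moreover have "int ((k + 1) * s) \<le> int n"
    using assms(2) by (simp only: of_nat_le_iff)
  ultimately show ?thesis
    using assms(3,4) by (simp add: of_nat_diff algebra_simps)
qed

lemma alternating_sum_axis_counts:
  assumes "k \<ge> 1" "\<phi> \<in> Pi\<^sub>E (index_pairs s) (overlap_choices k h)"
    and "n \<ge> (k + 1) * s" "m \<ge> (k + 1) * s"
  shows "(\<Sum>i\<le>2 * s. (-1) ^ i * real (2 * s choose i) *
      (real (axis_count k s (\<lambda>a. \<not> h a) \<phi> fst (int (n - i))) * real (axis_count k s h \<phi> snd (int (m - i)))))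
    = of_bool (\<forall>e\<in>index_pairs s. \<phi> e = None) * fact (2 * s)"
proof -
  have offsets: "fst w \<in> {- kmer_reach k (\<not> h a)..kmer_reach k (\<not> h b)}"
    "snd w \<in> {- kmer_reach k (h a)..kmer_reach k (h b)}"
    if "(a, b) \<in> index_pairs s" "\<phi> (a, b) = Some w" for a b w
    using pattern_offset_meets[OF assms(2) that] by (auto simp: meet_offsets_def)
  obtain R :: "real poly" where
    R: "if \<forall>e\<in>index_pairs s. \<phi> e = None then degree R = s \<and> lead_coeff R = 1 else degree R < s"
      "\<forall>N \<ge> int s * (int k - 1). real (axis_count k s (\<lambda>a. \<not> h a) \<phi> fst N) = poly R (of_int N)"
    using axis_count_poly[where s=s and \<phi>=\<phi> and \<pi>=fst and d="\<lambda>a. \<not> h a", OF assms(1) offsets(1)] by blast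
  obtain C :: "real poly" where
    C: "if \<forall>e\<in>index_pairs s. \<phi> e = None then degree C = s \<and> lead_coeff C = 1 else degree C < s"
      "\<forall>N \<ge> int s * (int k - 1). real (axis_count k s h \<phi> snd N) = poly C (of_int N)"
    using axis_count_poly[where s=s and \<phi>=\<phi> and \<pi>=snd and d=h, OF assms(1) offsets(2)] by blast
  have "real (axis_count k s (\<lambda>a. \<not> h a) \<phi> fst (int (n - i))) * real (axis_count k s h \<phi> snd (int (m - i)))
      = poly R (real n - real i) * poly C (real m - real i)" if "i \<le> 2 * s" for i
    using poly_at_diagonal_offset[OF assms(1,3) that R(2)] poly_at_diagonal_offset[OF assms(1,4) that C(2)]
    by simp
  then have "(\<Sum>i\<le>2 * s. (-1) ^ i * real (2 * s choose i) *
      (real (axis_count k s (\<lambda>a. \<not> h a) \<phi> fst (int (n - i))) * real (axis_count k s h \<phi> snd (int (m - i)))))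
    = (\<Sum>i\<le>2 * s. (-1) ^ i * real (2 * s choose i) * (poly R (real n - real i) * poly C (real m - real i)))"
    by (intro sum.cong refl) simp
  also have "\<dots> = of_bool (degree R + degree C = 2 * s) * fact (2 * s) * lead_coeff R * lead_coeff C"
    using R(1) C(1) by (intro alternating_binomial_sum_reflected_product) (auto split: if_splits)
  also have "\<dots> = of_bool (\<forall>e\<in>index_pairs s. \<phi> e = None) * fact (2 * s)"
    using R(1) C(1) by (auto split: if_splits)
  finally show ?thesis .
qed

lemma sum_pattern_sign_trivial:
  "(\<Sum>\<phi>\<in>Pi\<^sub>E (index_pairs s) (overlap_choices k h).
      pattern_sign s \<phi> * (of_bool (\<forall>e\<in>index_pairs s. \<phi> e = None) * c)) = c"
proof -
  let ?\<phi>0 = "\<lambda>e\<in>index_pairs s. None"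
  have "(\<Sum>\<phi>\<in>Pi\<^sub>E (index_pairs s) (overlap_choices k h).
      pattern_sign s \<phi> * (of_bool (\<forall>e\<in>index_pairs s. \<phi> e = None) * c))
    = (\<Sum>\<phi>\<in>Pi\<^sub>E (index_pairs s) (overlap_choices k h). if \<phi> = ?\<phi>0 then c else 0)"
  proof (intro sum.cong refl)
    fix \<phi> assume \<phi>: "\<phi> \<in> Pi\<^sub>E (index_pairs s) (overlap_choices k h)"
    show "pattern_sign s \<phi> * (of_bool (\<forall>e\<in>index_pairs s. \<phi> e = None) * c) = (if \<phi> = ?\<phi>0 then c else 0)"
    proof (cases "\<forall>e\<in>index_pairs s. \<phi> e = None")
      case True
      then have "{e \<in> index_pairs s. \<phi> e \<noteq> None} = {}"
        by auto
      then have "pattern_sign s \<phi> = 1"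
        unfolding pattern_sign_def by (simp only: card.empty power_0)
      moreover have "\<phi> = ?\<phi>0"
        using \<phi> True by (auto simp: PiE_def extensional_def fun_eq_iff)
      ultimately show ?thesis
        using True by simp
    next
      case False
      then show ?thesis
        by auto
    qed
  qed
  also have "\<dots> = c"
    by (simp add: finite_PiE finite_index_pairs overlap_choices_def finite_meet_offsets split_def)
  finally show ?thesis .
qed

lemma alternating_sum_card_ordered_configs:
  assumes "k \<ge> 1" "n \<ge> (k + 1) * s" "m \<ge> (k + 1) * s"
  shows "(\<Sum>i\<le>2 * s. (-1) ^ i * real (2 * s choose i) * real (card (ordered_configs k s (n - i) (m - i))))
    = 2 ^ s * fact (2 * s)"
proof -
  let ?c = "\<lambda>i. (-1) ^ i * real (2 * s choose i)"
  let ?A = "\<lambda>h \<phi> i. real (axis_count k s (\<lambda>a. \<not> h a) \<phi> fst (int (n - i)))"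
  let ?B = "\<lambda>h \<phi> i. real (axis_count k s h \<phi> snd (int (m - i)))"
  have "(\<Sum>i\<le>2 * s. ?c i * real (card (ordered_configs k s (n - i) (m - i))))
    = (\<Sum>i\<le>2 * s. \<Sum>h\<in>{..<s} \<rightarrow>\<^sub>E UNIV. \<Sum>\<phi>\<in>Pi\<^sub>E (index_pairs s) (overlap_choices k h).
        ?c i * (pattern_sign s \<phi> * ?A h \<phi> i * ?B h \<phi> i))"
    by (simp only: card_ordered_configs_expand sum_distrib_left)
  also have "\<dots> = (\<Sum>h\<in>{..<s} \<rightarrow>\<^sub>E UNIV. \<Sum>\<phi>\<in>Pi\<^sub>E (index_pairs s) (overlap_choices k h). \<Sum>i\<le>2 * s.
        ?c i * (pattern_sign s \<phi> * ?A h \<phi> i * ?B h \<phi> i))"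
    by (simp only: sum.swap[of _ "{..2 * s}"])
  also have "\<dots> = (\<Sum>h\<in>{..<s} \<rightarrow>\<^sub>E UNIV. \<Sum>\<phi>\<in>Pi\<^sub>E (index_pairs s) (overlap_choices k h). pattern_sign s \<phi> *
        (\<Sum>i\<le>2 * s. ?c i * (?A h \<phi> i * ?B h \<phi> i)))"
    by (simp only: sum_distrib_left mult_ac)
  also have "\<dots> = (\<Sum>h\<in>{..<s} \<rightarrow>\<^sub>E (UNIV :: bool set). fact (2 * s))"
    using assms by (simp add: alternating_sum_axis_counts sum_pattern_sign_trivial cong: sum.cong)
  also have "\<dots> = 2 ^ s * fact (2 * s)"
    by (simp add: card_PiE)
  finally show ?thesis .
qed

theorem theorem1:
  fixes k s n m :: nat
  assumes "k \<ge> 2" and "n \<ge> 1" and "m \<ge> 1"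
    and "n \<ge> (k + 1) * s" and "m \<ge> (k + 1) * s"
  shows "(\<Sum>i = 0..2 * s. (-1::real) ^ i * real (2 * s choose i)
            * real (kmer_count k s (n - i) (m - i)))
         = 2 ^ s * fact (2 * s) / fact s"
proof -
  have "real (kmer_count k s n' m') = real (card (ordered_configs k s n' m')) / fact s" for n' m'
    using card_ordered_configs[OF assms(1), of s n' m'] by (simp add: field_simps)
  then have "(\<Sum>i = 0..2 * s. (-1::real) ^ i * real (2 * s choose i) * real (kmer_count k s (n - i) (m - i)))
      = (\<Sum>i\<le>2 * s. (-1) ^ i * real (2 * s choose i) * real (card (ordered_configs k s (n - i) (m - i)))) / fact s"
    by (simp add: atLeast0AtMost sum_divide_distrib)
  also have "\<dots> = 2 ^ s * fact (2 * s) / fact s"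
    using assms by (simp add: alternating_sum_card_ordered_configs)
  finally show ?thesis .
qed

end
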